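(* Let $G=(V,W,E)$ be an odd bipartite graph with parts $V$ and $W$. Then there is some $V'\subseteq V$ with $|V'|\leq |W|$ such that the induced subgraph $G[V'\cup W]$ (with parts $V'$ and $W$) is odd.
   Context: A bipartite graph $G=(V,W,E)$ (with distinguished parts $V$, $W$) is called odd if for every nonempty $X\subseteq W$ there is some $v\in V$ such that $|X\cap N(v)|$ is odd, where $N(v)$ is the neighbourhood of $v$. *)

theory Defs
  imports Main
begin

definition bip_graph :: "'a set \<Rightarrow> 'b set \<Rightarrow> ('a \<times> 'b) set \<Rightarrow> bool" where
  "bip_graph V W E \<longleftrightarrow> finite V \<and> finite W \<and> E \<subseteq> V \<times> W"

definition nbhd :: "'a set \<Rightarrow> 'b set \<Rightarrow> ('a \<times> 'b) set \<Rightarrow> 'a \<Rightarrow> 'b set" where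
  "nbhd V W E v = {w \<in> W. (v, w) \<in> E}"

definition odd_bip :: "'a set \<Rightarrow> 'b set \<Rightarrow> ('a \<times> 'b) set \<Rightarrow> bool" where
  "odd_bip V W E \<longleftrightarrow>
     (\<forall>X. X \<subseteq> W \<and> X \<noteq> {} \<longrightarrow> (\<exists>v\<in>V. odd (card (X \<inter> nbhd V W E v))))"

definition induced_edges :: "'a set \<Rightarrow> 'b set \<Rightarrow> ('a \<times> 'b) set \<Rightarrow> ('a \<times> 'b) set" where
  "induced_edges V' W E = E \<inter> (V' \<times> W)"

end

theory Submission imports Defs begin

text \<open>For S \<subseteq> V let g(S) \<subseteq> W be the set of vertices with an odd number of neighbours
  in S. Counting the edges between S and X \<subseteq> W shows that |X \<inter> g(S)| and the sum of
  |X \<inter> N(v)| over v \<in> S have the same parity. If g is injective on the subsets of V, then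
  2^|V| \<le> 2^|W|. Otherwise g(S1) = g(S2) for some S1 \<noteq> S2, and on the nonempty symmetric
  difference T of S1 and S2 the sum of |X \<inter> N(v)| is even for every X. Then every u \<in> T is
  redundant: whenever |X \<inter> N(u)| is odd, so is |X \<inter> N(v)| for some other v \<in> T. Removing u
  keeps the graph odd, and induction on |V| finishes the proof.\<close>

definition odd_degree_part :: "('a \<times> 'b) set \<Rightarrow> 'b set \<Rightarrow> 'a set \<Rightarrow> 'b set" where
  "odd_degree_part E W S = {w \<in> W. odd (card {v \<in> S. (v, w) \<in> E})}"

lemma odd_bip_induced_iff:
  assumes "U \<subseteq> V"
  shows "odd_bip U W (induced_edges U W E) \<longleftrightarrow>
    (\<forall>X. X \<subseteq> W \<and> X \<noteq> {} \<longrightarrow> (\<exists>v\<in>U. odd (card (X \<inter> nbhd V W E v))))"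
proof -
  have "nbhd U W (induced_edges U W E) v = nbhd V W E v" if "v \<in> U" for v
    using that unfolding nbhd_def induced_edges_def by auto
  then show ?thesis
    unfolding odd_bip_def by simp
qed

lemma sum_card_Int_nbhd:
  assumes "finite S" "finite W" "X \<subseteq> W"
  shows "(\<Sum>v\<in>S. card (X \<inter> nbhd V W E v)) = (\<Sum>w\<in>X. card {v \<in> S. (v, w) \<in> E})"
proof -
  have fX: "finite X"
    using assms finite_subset by blast
  have "(\<Sum>v\<in>S. card (X \<inter> nbhd V W E v)) = (\<Sum>v\<in>S. \<Sum>w\<in>X. if (v, w) \<in> E then 1 else 0)"
  proof (rule sum.cong)
    fix v
    have "X \<inter> nbhd V W E v = {w \<in> X. (v, w) \<in> E}"
      using assms(3) unfolding nbhd_def by auto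
    then show "card (X \<inter> nbhd V W E v) = (\<Sum>w\<in>X. if (v, w) \<in> E then 1 else 0)"
      using fX by (simp add: sum.If_cases Int_def)
  qed simp
  also have "\<dots> = (\<Sum>w\<in>X. \<Sum>v\<in>S. if (v, w) \<in> E then 1 else 0)"
    by (rule sum.swap)
  also have "\<dots> = (\<Sum>w\<in>X. card {v \<in> S. (v, w) \<in> E})"
    using assms(1) by (simp add: sum.If_cases Int_def)
  finally show ?thesis .
qed

lemma odd_card_Int_odd_degree_part:
  assumes "finite S" "finite W" "X \<subseteq> W"
  shows "odd (card (X \<inter> odd_degree_part E W S)) \<longleftrightarrow> odd (\<Sum>v\<in>S. card (X \<inter> nbhd V W E v))"
proof -
  have "X \<inter> odd_degree_part E W S = {w \<in> X. odd (card {v \<in> S. (v, w) \<in> E})}"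
    using assms(3) unfolding odd_degree_part_def by auto
  moreover have "finite X"
    using assms finite_subset by blast
  ultimately show ?thesis
    by (simp add: sum_card_Int_nbhd[OF assms] even_sum_iff)
qed

lemma even_sum_sym_diff:
  fixes h :: "'a \<Rightarrow> nat"
  assumes "finite A" "finite B" "odd (sum h A) \<longleftrightarrow> odd (sum h B)"
  shows "even (sum h ((A - B) \<union> (B - A)))"
proof -
  have "A - A \<inter> B = A - B" "B - A \<inter> B = B - A"
    by auto
  then have "sum h A = sum h (A - B) + sum h (A \<inter> B)" "sum h B = sum h (B - A) + sum h (A \<inter> B)"
    using assms(1,2) sum.subset_diff[of "A \<inter> B" A h] sum.subset_diff[of "A \<inter> B" B h] by auto
  moreover have "sum h ((A - B) \<union> (B - A)) = sum h (A - B) + sum h (B - A)"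
    using assms(1,2) by (intro sum.union_disjoint) auto
  ultimately show ?thesis
    using assms(3) by presburger
qed

lemma card_le_if_inj_on_Pow:
  assumes "inj_on f (Pow A)" "f ` Pow A \<subseteq> Pow B" "finite A" "finite B"
  shows "card A \<le> card B"
proof -
  have "card (Pow A) \<le> card (Pow B)"
    using card_inj_on_le[OF assms(1,2)] assms(4) by simp
  then have "(2::nat) ^ card A \<le> 2 ^ card B"
    using assms(3,4) by (simp add: card_Pow)
  then show ?thesis
    by simp
qed

lemma odd_bip_induced_Diff_vertex:
  assumes odd: "odd_bip U W (induced_edges U W E)" and "U \<subseteq> V"
    and "finite T" "T \<subseteq> U" "u \<in> T"
    and even: "\<And>X. X \<subseteq> W \<Longrightarrow> even (\<Sum>v\<in>T. card (X \<inter> nbhd V W E v))"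
  shows "odd_bip (U - {u}) W (induced_edges (U - {u}) W E)"
  unfolding odd_bip_induced_iff[OF Diff_subset[THEN order_trans, OF \<open>U \<subseteq> V\<close>]]
proof (intro allI impI)
  fix X assume X: "X \<subseteq> W \<and> X \<noteq> {}"
  let ?h = "\<lambda>v. card (X \<inter> nbhd V W E v)"
  obtain v where v: "v \<in> U" "odd (?h v)"
    using odd X unfolding odd_bip_induced_iff[OF \<open>U \<subseteq> V\<close>] by blast
  show "\<exists>v\<in>U - {u}. odd (?h v)"
  proof (cases "v = u")
    case False
    then show ?thesis using v by blast
  next
    case True
    have "sum ?h T = ?h u + sum ?h (T - {u})"
      using sum.remove[OF \<open>finite T\<close> \<open>u \<in> T\<close>] .
    then have "odd (sum ?h (T - {u}))"
      using even[of X] X v True by simp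
    then obtain v' where "v' \<in> T - {u}" "odd (?h v')"
      using dvd_sum[of "T - {u}" 2 ?h] by blast
    then show ?thesis
      using \<open>T \<subseteq> U\<close> by blast
  qed
qed

lemma odd_bip_induced_small_subset:
  assumes "finite U" "U \<subseteq> V" "finite W" "odd_bip U W (induced_edges U W E)"
  shows "\<exists>V' \<subseteq> U. card V' \<le> card W \<and> odd_bip V' W (induced_edges V' W E)"
  using assms
proof (induction "card U" arbitrary: U rule: less_induct)
  case less
  let ?g = "odd_degree_part E W"
  show ?case
  proof (cases "inj_on ?g (Pow U)")
    case True
    have "?g ` Pow U \<subseteq> Pow W"
      unfolding odd_degree_part_def by auto
    then have "card U \<le> card W"
      using card_le_if_inj_on_Pow[OF True] less.prems(1,3) by blast
    then show ?thesis
      using less.prems(4) by blast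
  next
    case False
    then obtain S1 S2 where S: "S1 \<subseteq> U" "S2 \<subseteq> U" "S1 \<noteq> S2" "?g S1 = ?g S2"
      unfolding inj_on_def by blast
    define T where "T = (S1 - S2) \<union> (S2 - S1)"
    have "T \<subseteq> U"
      using S unfolding T_def by blast
    then have fin: "finite S1" "finite S2" "finite T" "T \<subseteq> U"
      using S(1,2) less.prems(1) by (auto intro: finite_subset)
    obtain u where "u \<in> T"
      using S(3) unfolding T_def by blast
    have "even (\<Sum>v\<in>T. card (X \<inter> nbhd V W E v))" if "X \<subseteq> W" for X
      unfolding T_def using fin S(4)
      by (intro even_sum_sym_diff)
        (simp_all add: odd_card_Int_odd_degree_part[OF _ less.prems(3) that, symmetric])
    then have "odd_bip (U - {u}) W (induced_edges (U - {u}) W E)"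
      using odd_bip_induced_Diff_vertex[OF less.prems(4,2) fin(3,4) \<open>u \<in> T\<close>] by blast
    moreover have "card (U - {u}) < card U"
      using \<open>u \<in> T\<close> fin(4) less.prems(1) by (intro card_Diff1_less) auto
    ultimately show ?thesis
      using less.hyps[of "U - {u}"] less.prems(1-3) by blast
  qed
qed

theorem mainTheorem4:
  fixes V :: "'a set" and W :: "'b set" and E :: "('a \<times> 'b) set"
  assumes "bip_graph V W E"
    and "odd_bip V W E"
  shows "\<exists>V'. V' \<subseteq> V \<and> card V' \<le> card W \<and> odd_bip V' W (induced_edges V' W E)"
proof -
  have "finite V" "finite W" "induced_edges V W E = E"
    using assms(1) unfolding bip_graph_def induced_edges_def by auto
  then show ?thesis
    using odd_bip_induced_small_subset[of V V W E] assms(2) by auto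
qed

end
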